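(* Let $p>1$, $k\ge2$, $\sigma_i=\frac{i(k-i)}2$, and $\|\cdot\|$ the $\ell^2$ norm on $\mathbb{R}^k$. (i) Let $\boldsymbol\xi(\tau)=(\xi_1,\dots,\xi_k)(\tau)$ be a solution of the system $\dot\xi_i=b_i-b_{i+1}$ ($i=1,\dots,k$), with $b_1=b_{k+1}=0$ and $b_i=\sigma_{i-1}(e^{-(\xi_i-\xi_{i-1})}-1)$ for $i=2,\dots,k$, such that $\sum_{i=1}^k\xi_i(0)=0$ and $|\xi_i(0)|\le C_0$ for all $i$, for some $C_0>0$. Then the solution is defined for all $\tau\ge0$ and there exists $C_1=C_1(C_0)>0$ such that $\sup_i|\xi_i(\tau)|\le C_1e^{-\tau}$ for all $\tau\ge0$. (ii) Let $(\zeta_i(s))_{i=1,\dots,k}$ be a solution, with initial data given at $s=1$, of the system $$\frac1{c_1}\dot\zeta_i=e^{-\frac2{p-1}(\zeta_i-\zeta_{i-1})}-e^{-\frac2{p-1}(\zeta_{i+1}-\zeta_i)},\quad i=1,\dots,k,$$ with the convention that the term $e^{-\frac2{p-1}(\zeta_1-\zeta_0)}$ and the term $e^{-\frac2{p-1}(\zeta_{k+1}-\zeta_k)}$ are absent (i.e. $\zeta_0\equiv-\infty$, $\zeta_{k+1}\equiv+\infty$). Then the solution is defined for all $s\ge1$ and there is $C>0$ such that for all $s\ge1$, $\sup_i|\zeta_i(s)-(\bar\zeta_i(s)+\zeta_0)|\le Cs^{-1}$, where $\zeta_0=\frac1k\sum_{i=1}^k\zeta_i(1)$.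
   Context: $c_1=c_1(p)>0$ is a fixed positive constant depending only on $p$. $\bar\zeta_i(s)=\left(i-\frac{k+1}2\right)\frac{p-1}2\log s+\bar\alpha_i$, $i=1,\dots,k$, where the $\bar\alpha_i$ are uniquely determined by $\sum_{i=1}^k\bar\alpha_i=0$ and $e^{-\frac2{p-1}(\bar\alpha_i-\bar\alpha_{i-1})}=\frac{p-1}{4c_1}(i-1)(k+1-i)$ for $i=2,\dots,k$; $(\bar\zeta_i)$ is then an explicit solution of the system in (ii) with zero center of mass. *)

theory Defs
  imports "HOL-Analysis.Analysis"
begin

text \<open>Points of R^k are represented as functions nat => real, only the
indices 1..k being relevant.\<close>

definition sigma :: "nat \<Rightarrow> nat \<Rightarrow> real" where
  "sigma k i = real i * (real k - real i) / 2"

definition bcoef :: "nat \<Rightarrow> (nat \<Rightarrow> real) \<Rightarrow> nat \<Rightarrow> real" where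
  "bcoef k x i = (if 2 \<le> i \<and> i \<le> k
      then sigma k (i - 1) * (exp (- (x i - x (i - 1))) - 1) else 0)"

definition rhs1 :: "nat \<Rightarrow> (nat \<Rightarrow> real) \<Rightarrow> nat \<Rightarrow> real" where
  "rhs1 k x i = bcoef k x i - bcoef k x (Suc i)"

definition solves1 :: "nat \<Rightarrow> (real \<Rightarrow> nat \<Rightarrow> real) \<Rightarrow> real set \<Rightarrow> bool" where
  "solves1 k xi I \<longleftrightarrow> (\<forall>t\<in>I. \<forall>i\<in>{1..k}.
      ((\<lambda>t. xi t i) has_real_derivative rhs1 k (xi t) i) (at t within I))"

definition Eterm :: "real \<Rightarrow> nat \<Rightarrow> (nat \<Rightarrow> real) \<Rightarrow> nat \<Rightarrow> real" where
  "Eterm p k z i = (if 2 \<le> i \<and> i \<le> k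
      then exp (- (2 / (p - 1)) * (z i - z (i - 1))) else 0)"

definition rhs2 :: "real \<Rightarrow> real \<Rightarrow> nat \<Rightarrow> (nat \<Rightarrow> real) \<Rightarrow> nat \<Rightarrow> real" where
  "rhs2 p c1 k z i = c1 * (Eterm p k z i - Eterm p k z (Suc i))"

definition solves2 :: "real \<Rightarrow> real \<Rightarrow> nat \<Rightarrow> (real \<Rightarrow> nat \<Rightarrow> real) \<Rightarrow> real set \<Rightarrow> bool" where
  "solves2 p c1 k zeta I \<longleftrightarrow> (\<forall>s\<in>I. \<forall>i\<in>{1..k}.
      ((\<lambda>s. zeta s i) has_real_derivative rhs2 p c1 k (zeta s) i) (at s within I))"

text \<open>The constants alpha_bar_i (i = 1..k), uniquely determined; set to 0 outside 1..k.\<close>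
definition alpha_bar :: "real \<Rightarrow> real \<Rightarrow> nat \<Rightarrow> nat \<Rightarrow> real" where
  "alpha_bar p c1 k = (THE a. (\<forall>i. i \<notin> {1..k} \<longrightarrow> a i = 0)
      \<and> (\<Sum>i=1..k. a i) = 0
      \<and> (\<forall>i\<in>{2..k}. exp (- (2 / (p - 1)) * (a i - a (i - 1)))
            = (p - 1) / (4 * c1) * (real i - 1) * (real k + 1 - real i)))"

definition zeta_bar :: "real \<Rightarrow> real \<Rightarrow> nat \<Rightarrow> nat \<Rightarrow> real \<Rightarrow> real" where
  "zeta_bar p c1 k i s = (real i - (real k + 1) / 2) * ((p - 1) / 2) * ln s + alpha_bar p c1 k i"

end

theory Submission
  imports Defs
begin

text \<open>The gaps \<open>\<xi> i - \<xi> (i - 1)\<close> of system (i) solve a cooperative system driven by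
  \<open>exp (- y)\<close>. By a comparison principle each gap stays between the solutions
  \<open>ln (1 + a * exp (- \<tau>))\<close> of the scalar equation \<open>y' = exp (- y) - 1\<close> starting at
  \<open>\<plusminus> 2 * C0\<close>, which decay like \<open>exp (- \<tau>)\<close>; as \<open>\<Sum>i. \<xi> i\<close> is conserved, the \<open>\<xi> i\<close>
  decay as well. The lower bound on the gaps shows that a globally Lipschitz truncation of the
  nonlinearity, whose solutions exist for all times by a contraction argument in an
  exponentially weighted sup norm, actually solves (i). System (ii) is (i) after the
  substitution \<open>\<zeta> s i = zeta_bar p c1 k i s + \<zeta>\<^sub>0 + (p - 1) / 2 * \<xi> (ln s) i\<close>.\<close>

section \<open>Differential inequalities\<close>

lemma has_real_derivative_pos_part_sq:
  "((\<lambda>u::real. (max u 0)^2) has_real_derivative 2 * max u 0) (at u)"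
proof (cases "u = 0")
  case True
  have "((\<lambda>y::real. (max y 0)^2 / y) \<longlongrightarrow> 0) (at 0)"
  proof (rule tendsto_sandwich[where f="\<lambda>y. - \<bar>y\<bar>" and h="\<lambda>y. \<bar>y\<bar>"])
    show "\<forall>\<^sub>F y in at 0. - \<bar>y\<bar> \<le> (max y 0)^2 / (y::real)"
      by (intro always_eventually allI) (auto simp: max_def power2_eq_square divide_simps)
    show "\<forall>\<^sub>F y in at 0. (max y 0)^2 / y \<le> \<bar>y::real\<bar>"
      by (intro always_eventually allI) (auto simp: max_def power2_eq_square divide_simps)
  qed (auto intro!: tendsto_eq_intros)
  then show ?thesis using True by (simp add: DERIV_def)
next
  case False
  then consider "u > 0" | "u < 0" by linarith
  then show ?thesis
  proof cases
    case 1
    have ev: "\<forall>\<^sub>F y in nhds u. (max y 0)^2 = y^2"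
      using eventually_nhds_in_open[of "{0<..}" u] 1 by (auto elim!: eventually_mono)
    have "((\<lambda>y. y^2) has_real_derivative 2 * u) (at u)"
      by (auto intro!: derivative_eq_intros)
    then show ?thesis using 1 by (subst DERIV_cong_ev[OF refl ev refl]) auto
  next
    case 2
    have ev: "\<forall>\<^sub>F y in nhds u. (max y 0)^2 = 0"
      using eventually_nhds_in_open[of "{..<0}" u] 2 by (auto elim!: eventually_mono)
    have "((\<lambda>y. 0) has_real_derivative 0) (at u)"
      by simp
    then show ?thesis using 2 by (subst DERIV_cong_ev[OF refl ev refl]) auto
  qed
qed

lemma DERIV_within_nonpos_imp_nonincreasing:
  fixes f f' :: "real \<Rightarrow> real"
  assumes "a \<le> b"
    and der: "\<And>x. x \<in> {a..b} \<Longrightarrow> (f has_real_derivative f' x) (at x within {a..b})"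
    and nonpos: "\<And>x. x \<in> {a..b} \<Longrightarrow> f' x \<le> 0"
  shows "f b \<le> f a"
proof (cases "a = b")
  case False
  then have "a < b" using assms(1) by simp
  then obtain x where x: "x \<in> {a<..<b}" "f b - f a = f' x * (b - a)"
    using mvt_simple[of a b f "\<lambda>x h. f' x * h"] der by (auto simp: has_field_derivative_def)
  have "f' x * (b - a) \<le> 0"
    using nonpos[of x] x(1) by (simp add: mult_nonpos_nonneg)
  then show ?thesis using x(2) by simp
qed simp

lemma gronwall_zero:
  fixes P P' :: "real \<Rightarrow> real"
  assumes "0 \<le> t"
    and der: "\<And>s. s \<in> {0..t} \<Longrightarrow> (P has_real_derivative P' s) (at s within {0..t})"
    and growth: "\<And>s. s \<in> {0..t} \<Longrightarrow> P' s \<le> c * P s"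
    and "P 0 = 0"
  shows "P t \<le> 0"
proof -
  have "P t * exp (- c * t) \<le> P 0 * exp (- c * 0)"
  proof (rule DERIV_within_nonpos_imp_nonincreasing[OF \<open>0 \<le> t\<close>])
    fix s assume s: "s \<in> {0..t}"
    show "((\<lambda>s. P s * exp (- c * s)) has_real_derivative (P' s - c * P s) * exp (- c * s))
        (at s within {0..t})"
      by (rule derivative_eq_intros der[OF s] | simp add: algebra_simps)+
    show "(P' s - c * P s) * exp (- c * s) \<le> 0"
      using growth[OF s] by (simp add: mult_nonpos_nonneg)
  qed
  then show ?thesis using \<open>P 0 = 0\<close> by (simp add: mult_le_0_iff)
qed

lemma sum_pos_part_sq_deriv_le:
  fixes x x' :: "'i \<Rightarrow> real"
  assumes "B \<ge> 0"
    and control: "\<And>j. j \<in> A \<Longrightarrow> x j > 0 \<Longrightarrow> x' j \<le> B * (\<Sum>l\<in>A. max (x l) 0)"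
  shows "(\<Sum>j\<in>A. 2 * max (x j) 0 * x' j) \<le> 2 * B * real (card A) * (\<Sum>j\<in>A. (max (x j) 0)^2)"
proof -
  define S where "S = (\<Sum>j\<in>A. max (x j) 0)"
  have "2 * max (x j) 0 * x' j \<le> 2 * max (x j) 0 * (B * S)" if "j \<in> A" for j
    using control[OF that] by (cases "x j > 0") (simp_all add: S_def)
  then have "(\<Sum>j\<in>A. 2 * max (x j) 0 * x' j) \<le> (\<Sum>j\<in>A. 2 * max (x j) 0 * (B * S))"
    by (rule sum_mono)
  also have "\<dots> = 2 * B * S^2"
    by (simp add: S_def power2_eq_square sum_distrib_left sum_distrib_right algebra_simps)
  also have "\<dots> \<le> 2 * B * (real (card A) * (\<Sum>j\<in>A. (max (x j) 0)^2))"
    using Cauchy_Schwarz_ineq_sum[of "\<lambda>j. max (x j) 0" "\<lambda>_. 1" A] \<open>B \<ge> 0\<close>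
    unfolding S_def by (intro mult_left_mono) (auto simp: mult.commute)
  finally show ?thesis by (simp add: algebra_simps)
qed

text \<open>The proof is Gronwall's inequality for the sum of the squared positive parts.\<close>

lemma family_nonpos_invariant:
  fixes d d' :: "'i \<Rightarrow> real \<Rightarrow> real" and L :: "real \<Rightarrow> real"
  assumes A: "finite A"
    and der: "\<And>i t. i \<in> A \<Longrightarrow> t \<in> {0..<T} \<Longrightarrow> (d i has_real_derivative d' i t) (at t within {0..<T})"
    and init: "\<And>i. i \<in> A \<Longrightarrow> d i 0 \<le> 0"
    and control: "\<And>i t. i \<in> A \<Longrightarrow> t \<in> {0..<T} \<Longrightarrow> d i t > 0 \<Longrightarrow>
        d' i t \<le> L t * (\<Sum>j\<in>A. max (d j t) 0)"
    and L: "continuous_on {0..<T} L"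
    and "i \<in> A" and t: "t \<in> {0..<T}"
  shows "d i t \<le> 0"
proof -
  have sub: "{0..t} \<subseteq> {0..<T}" using t by auto
  obtain B where B: "\<And>s. s \<in> {0..t} \<Longrightarrow> L s \<le> B" "B \<ge> 0"
  proof -
    have "compact (L ` {0..t})"
      using continuous_on_subset[OF L sub] by (intro compact_continuous_image) auto
    then obtain B0 where "\<And>y. y \<in> L ` {0..t} \<Longrightarrow> norm y \<le> B0"
      using compact_imp_bounded bounded_iff by metis
    then show ?thesis by (intro that[of "max B0 0"]) (force simp: abs_le_iff)+
  qed
  define P where "P s = (\<Sum>j\<in>A. (max (d j s) 0)^2)" for s
  have "P t \<le> 0"
  proof (rule gronwall_zero[where P = P and t = t and c = "2 * B * real (card A)"])
    fix s assume s: "s \<in> {0..t}"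
    show "(P has_real_derivative (\<Sum>j\<in>A. 2 * max (d j s) 0 * d' j s)) (at s within {0..t})"
      unfolding P_def
      by (intro DERIV_sum DERIV_chain2[OF has_real_derivative_pos_part_sq]
          DERIV_subset[OF der]) (use s sub in auto)
    have "d' j s \<le> B * (\<Sum>l\<in>A. max (d l s) 0)" if "j \<in> A" "d j s > 0" for j
    proof -
      have "d' j s \<le> L s * (\<Sum>l\<in>A. max (d l s) 0)"
        using control[OF that(1) _ that(2)] s sub by auto
      also have "\<dots> \<le> B * (\<Sum>l\<in>A. max (d l s) 0)"
        using B(1)[OF s] by (intro mult_right_mono sum_nonneg) auto
      finally show ?thesis .
    qed
    then show "(\<Sum>j\<in>A. 2 * max (d j s) 0 * d' j s) \<le> 2 * B * real (card A) * P s"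
      unfolding P_def using B(2) by (intro sum_pos_part_sq_deriv_le)
  qed (use t init in \<open>auto simp: P_def intro!: sum.neutral\<close>)
  moreover have "(max (d i t) 0)^2 \<le> P t"
    unfolding P_def using A \<open>i \<in> A\<close> by (intro member_le_sum) auto
  ultimately have "(max (d i t) 0)^2 \<le> 0" by linarith
  then show ?thesis by (cases "d i t \<le> 0") auto
qed

section \<open>Global solutions of globally Lipschitz equations\<close>

lemma exp_weighted_integral_bound:
  fixes f :: "real \<Rightarrow> 'b::banach"
  assumes lam: "lam > 0" and u: "u \<ge> 0" and "c \<ge> 0" "d \<ge> 0"
    and f: "continuous_on {0..u} f"
    and bound: "\<And>s. s \<in> {0..u} \<Longrightarrow> norm (f s) \<le> c + d * exp (lam * s)"
  shows "exp (- lam * u) * norm (integral {0..u} f) \<le> (c + d) / lam"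
proof -
  have "((\<lambda>s. c + d * exp (lam * s)) has_integral
      (c * u + d * exp (lam * u) / lam) - (c * 0 + d * exp (lam * 0) / lam)) {0..u}"
    apply (rule fundamental_theorem_of_calculus[OF u])
    unfolding has_real_derivative_iff_has_vector_derivative[symmetric]
    using lam by (auto intro!: derivative_eq_intros)
  then have "norm (integral {0..u} f) \<le> c * u + d * (exp (lam * u) - 1) / lam"
    using integral_norm_bound_integral[OF integrable_continuous_real[OF f] _ bound]
    by (simp add: integral_unique has_integral_integrable right_diff_distrib diff_divide_distrib)
  then have "exp (- lam * u) * norm (integral {0..u} f)
      \<le> exp (- lam * u) * (c * u + d * (exp (lam * u) - 1) / lam)"
    by (rule mult_left_mono) simp
  also have "\<dots> = c * (exp (- lam * u) * u) + d * ((1 - exp (- lam * u)) / lam)"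
    using lam by (simp add: exp_minus divide_simps)
  also have "\<dots> \<le> c * (1 / lam) + d * (1 / lam)"
  proof (intro add_mono mult_left_mono)
    have "lam * u \<le> exp (lam * u)" using exp_ge_add_one_self[of "lam * u"] by linarith
    then show "exp (- lam * u) * u \<le> 1 / lam"
      using lam by (simp add: exp_minus field_simps)
  qed (use lam \<open>c \<ge> 0\<close> \<open>d \<ge> 0\<close> in \<open>auto simp: divide_right_mono\<close>)
  finally show ?thesis by (simp add: add_divide_distrib)
qed

lemma integral_from_zero_has_vector_derivative:
  fixes f :: "real \<Rightarrow> 'b::banach"
  assumes "continuous_on UNIV f" and "t \<ge> 0"
  shows "((\<lambda>u. integral {0..u} f) has_vector_derivative f t) (at t within {0..})"
proof -
  have "((\<lambda>u. integral {0..u} f) has_vector_derivative f t) (at t within {0..t + 1})"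
    using assms by (intro integral_has_vector_derivative) (auto intro: continuous_on_subset)
  moreover have "at t within {0..t + 1} = at t within {0..}"
    by (rule at_within_nhd[where S = "{..<t + 1}"]) auto
  ultimately show ?thesis by simp
qed

lemma continuous_on_integral_from_zero:
  fixes f :: "real \<Rightarrow> 'b::banach"
  assumes "continuous_on UNIV f"
  shows "continuous_on UNIV (\<lambda>t. integral {0..max t 0} f)"
proof -
  have "continuous_on {0..} (\<lambda>u. integral {0..u} f)"
    unfolding continuous_on_eq_continuous_within
    by (auto intro: has_vector_derivative_continuous integral_from_zero_has_vector_derivative[OF assms])
  then show ?thesis by (rule continuous_on_compose2) (auto intro!: continuous_intros)
qed

text \<open>The Picard operator written for \<open>\<psi> t = exp (- lam * t) *\<^sub>R \<phi> t\<close>: in this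
  exponentially weighted sup norm it is a contraction once \<open>lam > 2 * L\<close>, which gives
  solutions on the whole half-line at once.\<close>

definition weighted_picard ::
    "('b::banach \<Rightarrow> 'b) \<Rightarrow> real \<Rightarrow> 'b \<Rightarrow> (real \<Rightarrow>\<^sub>C 'b) \<Rightarrow> real \<Rightarrow> 'b" where
  "weighted_picard F lam x0 \<psi> t = exp (- lam * max t 0) *\<^sub>R
      (x0 + integral {0..max t 0} (\<lambda>s. F (exp (lam * s) *\<^sub>R \<psi> s)))"

context
  fixes F :: "'b::banach \<Rightarrow> 'b" and L :: real
  assumes lipschitz: "\<And>u v. norm (F u - F v) \<le> L * norm (u - v)" and L: "0 \<le> L"
begin

lemma continuous_on_weighted_integrand:
  "continuous_on UNIV (\<lambda>s. F (exp (lam * s) *\<^sub>R apply_bcontfun \<psi> s))"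
proof -
  have "continuous_on UNIV F"
    by (rule lipschitz_on_continuous_on[of L]) (use lipschitz L in \<open>simp add: lipschitz_on_def dist_norm\<close>)
  then show ?thesis by (rule continuous_on_compose2) (auto intro!: continuous_intros)
qed

lemma weighted_picard_bcontfun:
  assumes lam: "lam > 0"
  shows "weighted_picard F lam x0 \<psi> \<in> bcontfun"
proof (rule bcontfun_normI)
  show "continuous_on UNIV (weighted_picard F lam x0 \<psi>)"
    unfolding weighted_picard_def
    by (intro continuous_intros continuous_on_integral_from_zero continuous_on_weighted_integrand)
  fix t :: real
  define u where "u = max t 0"
  have u: "u \<ge> 0" by (simp add: u_def)
  have "exp (- lam * u) * norm (integral {0..u} (\<lambda>s. F (exp (lam * s) *\<^sub>R \<psi> s)))
      \<le> (norm (F 0) + L * norm \<psi>) / lam"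
  proof (rule exp_weighted_integral_bound[OF lam u])
    fix s
    have "norm (F (exp (lam * s) *\<^sub>R \<psi> s)) \<le> norm (F 0) + L * norm (exp (lam * s) *\<^sub>R \<psi> s)"
      using lipschitz[of "exp (lam * s) *\<^sub>R \<psi> s" 0]
        norm_triangle_ineq2[of "F (exp (lam * s) *\<^sub>R \<psi> s)" "F 0"] by simp
    also have "\<dots> \<le> norm (F 0) + L * norm \<psi> * exp (lam * s)"
      using L norm_bounded[of \<psi> s] by (simp add: mult.assoc mult_left_mono mult_right_mono)
    finally show "norm (F (exp (lam * s) *\<^sub>R \<psi> s)) \<le> norm (F 0) + L * norm \<psi> * exp (lam * s)" .
  qed (auto intro: continuous_on_subset[OF continuous_on_weighted_integrand] simp: L)
  moreover have "exp (- lam * u) * norm x0 \<le> norm x0" using lam u by (simp add: mult_left_le_one_le)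
  moreover have "norm (weighted_picard F lam x0 \<psi> t) \<le> exp (- lam * u) * norm x0
      + exp (- lam * u) * norm (integral {0..u} (\<lambda>s. F (exp (lam * s) *\<^sub>R \<psi> s)))"
    unfolding weighted_picard_def u_def[symmetric] distrib_left[symmetric]
    by (simp add: norm_triangle_ineq mult_left_mono)
  ultimately show "norm (weighted_picard F lam x0 \<psi> t) \<le> norm x0 + (norm (F 0) + L * norm \<psi>) / lam"
    by linarith
qed

lemma apply_Bcontfun_weighted_picard:
  "lam > 0 \<Longrightarrow> apply_bcontfun (Bcontfun (weighted_picard F lam x0 \<psi>)) = weighted_picard F lam x0 \<psi>"
  using weighted_picard_bcontfun by (simp add: Bcontfun_inverse)

lemma weighted_picard_contraction:
  assumes lam: "lam > 0"
  shows "dist (Bcontfun (weighted_picard F lam x0 \<psi>1)) (Bcontfun (weighted_picard F lam x0 \<psi>2))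
    \<le> L / lam * dist \<psi>1 \<psi>2"
proof (rule dist_bound)
  fix t :: real
  define u where "u = max t 0"
  define f where "f \<psi> s = F (exp (lam * s) *\<^sub>R apply_bcontfun \<psi> s)" for \<psi> s
  have f: "continuous_on {0..u} (f \<psi>)" for \<psi>
    unfolding f_def by (rule continuous_on_subset[OF continuous_on_weighted_integrand]) auto
  have "exp (- lam * u) * norm (integral {0..u} (\<lambda>s. f \<psi>1 s - f \<psi>2 s)) \<le> (0 + L * dist \<psi>1 \<psi>2) / lam"
  proof (rule exp_weighted_integral_bound[OF lam])
    fix s
    have "norm (f \<psi>1 s - f \<psi>2 s) \<le> L * (exp (lam * s) * dist (\<psi>1 s) (\<psi>2 s))"
      using lipschitz[of "exp (lam * s) *\<^sub>R \<psi>1 s" "exp (lam * s) *\<^sub>R \<psi>2 s"]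
      by (simp add: f_def dist_norm scaleR_diff_right[symmetric])
    also have "\<dots> \<le> L * (exp (lam * s) * dist \<psi>1 \<psi>2)"
      using L by (intro mult_left_mono dist_bounded) auto
    finally show "norm (f \<psi>1 s - f \<psi>2 s) \<le> 0 + L * dist \<psi>1 \<psi>2 * exp (lam * s)"
      by (simp add: algebra_simps)
  qed (use L f in \<open>auto simp: u_def intro: continuous_on_diff\<close>)
  then show "dist (Bcontfun (weighted_picard F lam x0 \<psi>1) t) (Bcontfun (weighted_picard F lam x0 \<psi>2) t)
      \<le> L / lam * dist \<psi>1 \<psi>2"
    using integral_diff[OF integrable_continuous_real[OF f] integrable_continuous_real[OF f]]
    by (simp add: apply_Bcontfun_weighted_picard[OF lam] weighted_picard_def u_def[symmetric]
        f_def[symmetric] dist_norm scaleR_diff_right[symmetric])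
qed

lemma lipschitz_global_solution:
  "\<exists>\<phi>. \<phi> 0 = x0 \<and> (\<forall>t\<ge>0. (\<phi> has_vector_derivative F (\<phi> t)) (at t within {0..}))"
proof -
  define lam where "lam = 2 * L + 1"
  have lam: "lam > 0" "L / lam < 1" using L by (auto simp: lam_def)
  obtain \<psi> where fixed: "Bcontfun (weighted_picard F lam x0 \<psi>) = \<psi>"
    using banach_fix_type[of "L / lam" "\<lambda>\<psi>. Bcontfun (weighted_picard F lam x0 \<psi>)"]
      weighted_picard_contraction[OF lam(1)] lam L by auto
  define \<phi> where "\<phi> t = exp (lam * t) *\<^sub>R apply_bcontfun \<psi> t" for t
  have \<phi>: "\<phi> t = x0 + integral {0..t} (\<lambda>s. F (\<phi> s))" if "t \<ge> 0" for t
  proof -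
    have "apply_bcontfun \<psi> t
        = exp (- (lam * t)) *\<^sub>R (x0 + integral {0..t} (\<lambda>s. F (\<phi> s)))"
      using arg_cong[OF fixed, of "\<lambda>\<psi>. apply_bcontfun \<psi> t"] that
      by (simp add: apply_Bcontfun_weighted_picard[OF lam(1)] weighted_picard_def \<phi>_def)
    then show ?thesis by (simp add: \<phi>_def[of t] flip: exp_add)
  qed
  show ?thesis
  proof (intro exI conjI allI impI)
    show "\<phi> 0 = x0" using \<phi>[of 0] by simp
    fix t :: real assume t: "t \<ge> 0"
    have "((\<lambda>u. integral {0..u} (\<lambda>s. F (\<phi> s))) has_vector_derivative F (\<phi> t)) (at t within {0..})"
      using integral_from_zero_has_vector_derivative[OF continuous_on_weighted_integrand t]
      by (simp add: \<phi>_def)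
    then have "((\<lambda>u. x0 + integral {0..u} (\<lambda>s. F (\<phi> s))) has_vector_derivative F (\<phi> t))
        (at t within {0..})"
      using has_vector_derivative_add[OF has_vector_derivative_const] by fastforce
    then show "(\<phi> has_vector_derivative F (\<phi> t)) (at t within {0..})"
      by (rule has_vector_derivative_transform[rotated 2]) (use t \<phi> in auto)
  qed
qed

end

section \<open>System (i) with a general nonlinearity\<close>

definition bcoef_g :: "nat \<Rightarrow> (real \<Rightarrow> real) \<Rightarrow> (nat \<Rightarrow> real) \<Rightarrow> nat \<Rightarrow> real" where
  "bcoef_g k g x i = (if 2 \<le> i \<and> i \<le> k then sigma k (i - 1) * (g (x i - x (i - 1)) - 1) else 0)"

definition rhs_g :: "nat \<Rightarrow> (real \<Rightarrow> real) \<Rightarrow> (nat \<Rightarrow> real) \<Rightarrow> nat \<Rightarrow> real" where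
  "rhs_g k g x i = bcoef_g k g x i - bcoef_g k g x (Suc i)"

definition solves_g :: "nat \<Rightarrow> (real \<Rightarrow> real) \<Rightarrow> (real \<Rightarrow> nat \<Rightarrow> real) \<Rightarrow> real set \<Rightarrow> bool" where
  "solves_g k g xi I \<longleftrightarrow> (\<forall>t\<in>I. \<forall>i\<in>{1..k}.
      ((\<lambda>t. xi t i) has_real_derivative rhs_g k g (xi t) i) (at t within I))"

lemma rhs1_eq_rhs_g: "rhs1 k = rhs_g k (\<lambda>y. exp (- y))"
  by (intro ext) (simp add: rhs1_def rhs_g_def bcoef_g_def bcoef_def)

lemma solves1_iff_solves_g: "solves1 k xi I \<longleftrightarrow> solves_g k (\<lambda>y. exp (- y)) xi I"
  by (simp add: solves1_def solves_g_def rhs1_eq_rhs_g)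

lemma solves_g_subset: "solves_g k g xi I \<Longrightarrow> J \<subseteq> I \<Longrightarrow> solves_g k g xi J"
  unfolding solves_g_def using DERIV_subset by blast

lemma sigma_nonneg: "i \<le> k \<Longrightarrow> sigma k i \<ge> 0"
  by (simp add: sigma_def)

lemma sigma_le_square: "i \<le> k \<Longrightarrow> sigma k i \<le> real k ^ 2"
proof -
  assume "i \<le> k"
  then have "real i * (real k - real i) \<le> real k * real k"
    by (intro mult_mono) auto
  moreover have "0 \<le> real k * real k" by simp
  ultimately have "real i * (real k - real i) / 2 \<le> real k * real k" by linarith
  then show ?thesis by (simp add: sigma_def power2_eq_square)
qed

lemma sigma_0 [simp]: "sigma k 0 = 0" and sigma_self [simp]: "sigma k k = 0"
  by (simp_all add: sigma_def)

lemma sigma_diff: "1 \<le> i \<Longrightarrow> sigma k (i - 1) - sigma k i = real i - (real k + 1) / 2"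
  by (auto simp: sigma_def of_nat_diff field_simps)

lemma sigma_second_diff: "2 \<le> i \<Longrightarrow> sigma k (i - 2) - 2 * sigma k (i - 1) + sigma k i = -1"
  by (auto simp: sigma_def of_nat_diff field_simps)

lemma bcoef_g_eq:
  "1 \<le> i \<Longrightarrow> i \<le> Suc k \<Longrightarrow> bcoef_g k g x i = sigma k (i - 1) * (g (x i - x (i - 1)) - 1)"
  by (auto simp: bcoef_g_def le_Suc_eq)

lemma sum_rhs_g: "(\<Sum>i=1..k. rhs_g k g x i) = 0"
  unfolding rhs_g_def by (subst sum_subtractf, subst sum.shift_bounds_cl_Suc_ivl[symmetric])
    (simp add: sum.atLeast_Suc_atMost bcoef_g_def)

lemma rhs_g_cong: "(\<And>j. j \<in> {1..k} \<Longrightarrow> x j = x' j) \<Longrightarrow> rhs_g k g x i = rhs_g k g x' i"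
proof -
  assume same: "\<And>j. j \<in> {1..k} \<Longrightarrow> x j = x' j"
  have "bcoef_g k g x j = bcoef_g k g x' j" for j
  proof (cases "2 \<le> j \<and> j \<le> k")
    case True
    then have "j \<in> {1..k}" "j - 1 \<in> {1..k}" by auto
    then have "x j = x' j" "x (j - 1) = x' (j - 1)" using same by blast+
    then show ?thesis by (simp add: bcoef_g_def)
  qed (auto simp: bcoef_g_def)
  then show ?thesis by (simp add: rhs_g_def)
qed

lemma bcoef_g_lipschitz:
  assumes g: "\<And>a b. \<bar>g a - g b\<bar> \<le> E * \<bar>a - b\<bar>" and E: "0 \<le> E"
    and close: "\<And>j. \<bar>x j - x' j\<bar> \<le> D"
  shows "\<bar>bcoef_g k g x j - bcoef_g k g x' j\<bar> \<le> real k ^ 2 * (E * (2 * D))"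
proof (cases "2 \<le> j \<and> j \<le> k")
  case True
  then have \<sigma>: "0 \<le> sigma k (j - 1)" "sigma k (j - 1) \<le> real k ^ 2"
    by (auto intro: sigma_nonneg sigma_le_square)
  have "\<bar>g (x j - x (j - 1)) - g (x' j - x' (j - 1))\<bar> \<le> E * \<bar>(x j - x (j - 1)) - (x' j - x' (j - 1))\<bar>"
    by (rule g)
  also have "\<dots> \<le> E * (2 * D)"
    using close[of j] close[of "j - 1"] E by (intro mult_left_mono) auto
  finally have "sigma k (j - 1) * \<bar>g (x j - x (j - 1)) - g (x' j - x' (j - 1))\<bar> \<le> real k ^ 2 * (E * (2 * D))"
    using \<sigma> E by (intro mult_mono) auto
  moreover have "bcoef_g k g x j - bcoef_g k g x' j = sigma k (j - 1) * (g (x j - x (j - 1)) - g (x' j - x' (j - 1)))"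
    using True by (simp add: bcoef_g_def algebra_simps)
  ultimately show ?thesis using \<sigma> by (simp add: abs_mult)
next
  case False
  then have "bcoef_g k g x j = 0" "bcoef_g k g x' j = 0" by (auto simp: bcoef_g_def)
  moreover have "0 \<le> D" using close[of 0] by linarith
  ultimately show ?thesis using E by simp
qed

text \<open>The gaps \<open>x i - x (i - 1)\<close> evolve by a discrete Laplacian of the \<open>bcoef_g\<close>; since the
  second difference of \<open>sigma\<close> is \<open>-1\<close>, comparing with a constant state \<open>G\<close> of the scalar
  equation \<open>y' = g y - 1\<close> leaves only differences of values of \<open>g\<close>.\<close>

lemma rhs_g_gap_eq:
  assumes i: "i \<in> {2..k}"
  shows "rhs_g k g x i - rhs_g k g x (i - 1) - (G - 1) =
     2 * sigma k (i - 1) * (g (x i - x (i - 1)) - G)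
     + sigma k i * (G - g (x (Suc i) - x i))
     + sigma k (i - 2) * (G - g (x (i - 1) - x (i - 2)))"
proof -
  have e1: "bcoef_g k g x i = sigma k (i - 1) * (g (x i - x (i - 1)) - 1)"
    using i by (intro bcoef_g_eq) auto
  have e2: "bcoef_g k g x (Suc i) = sigma k i * (g (x (Suc i) - x i) - 1)"
    using bcoef_g_eq[of "Suc i" k g x] i by auto
  have e3: "bcoef_g k g x (i - 1) = sigma k (i - 2) * (g (x (i - 1) - x (i - 2)) - 1)"
    using bcoef_g_eq[of "i - 1" k g x] i by (auto simp: numeral_2_eq_2)
  have "Suc (i - 1) = i" using i by auto
  then have "rhs_g k g x i - rhs_g k g x (i - 1)
      = 2 * bcoef_g k g x i - bcoef_g k g x (Suc i) - bcoef_g k g x (i - 1)"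
    unfolding rhs_g_def by simp
  moreover have \<sigma>: "sigma k i = -1 - sigma k (i - 2) + 2 * sigma k (i - 1)"
    using sigma_second_diff[of i k] i by auto
  ultimately show ?thesis unfolding e1 e2 e3 \<sigma> by (simp add: algebra_simps)
qed

text \<open>The last condition says that \<open>g\<close> is antitone and that \<open>g a - g b \<le> g a * (b - a)\<close>
  for \<open>a \<le> b\<close>, as for the convex function \<open>exp (- y)\<close>.\<close>

definition admissible :: "(real \<Rightarrow> real) \<Rightarrow> bool" where
  "admissible g \<longleftrightarrow> (\<forall>a. g a > 0) \<and> continuous_on UNIV g
     \<and> (\<forall>a b. g a - g b \<le> g a * max (b - a) 0)"

lemma admissible_pos: "admissible g \<Longrightarrow> g a > 0"
  by (simp add: admissible_def)

lemma admissible_continuous: "admissible g \<Longrightarrow> continuous_on UNIV g"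
  by (simp add: admissible_def)

lemma admissible_increment: "admissible g \<Longrightarrow> g a - g b \<le> g a * max (b - a) 0"
  by (simp add: admissible_def)

lemma admissible_antimono: "admissible g \<Longrightarrow> a \<le> b \<Longrightarrow> g b \<le> g a"
  using admissible_increment[of g b a] by simp

lemma exp_minus_increment: "exp (- a) - exp (- b) \<le> exp (- a) * max (b - a) (0::real)"
proof (cases "a \<le> b")
  case True
  have "exp (- a) * (1 + (a - b)) \<le> exp (- a) * exp (a - b)"
    using exp_ge_add_one_self[of "a - b"] by (intro mult_left_mono) auto
  then show ?thesis using True by (simp add: algebra_simps max_def flip: exp_add)
qed simp

lemma admissible_exp_minus: "admissible (\<lambda>y. exp (- y))"
  unfolding admissible_def by (auto intro!: continuous_intros exp_minus_increment)

lemma admissible_exp_minus_max: "admissible (\<lambda>y. exp (- max y M))"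
proof -
  have "exp (- max a M) - exp (- max b M) \<le> exp (- max a M) * max (b - a) 0" for a b :: real
  proof -
    have "exp (- max a M) - exp (- max b M) \<le> exp (- max a M) * max (max b M - max a M) 0"
      by (rule exp_minus_increment)
    also have "\<dots> \<le> exp (- max a M) * max (b - a) 0"
      by (intro mult_left_mono) (auto simp: max_def)
    finally show ?thesis .
  qed
  then show ?thesis unfolding admissible_def by (auto intro!: continuous_intros)
qed

lemma exp_minus_max_lipschitz:
  "\<bar>exp (- max a M) - exp (- max b M)\<bar> \<le> exp (- M) * \<bar>a - b\<bar>" for a b M :: real
proof -
  have le: "\<bar>exp (- max a M) - exp (- max b M)\<bar> \<le> exp (- M) * \<bar>a - b\<bar>" if "a \<le> b" for a b
  proof -
    let ?g = "\<lambda>y. exp (- max y M)"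
    have "?g a - ?g b \<le> ?g a * max (b - a) 0"
      by (rule admissible_increment[OF admissible_exp_minus_max])
    also have "\<dots> \<le> exp (- M) * \<bar>a - b\<bar>"
      using that by (intro mult_mono) auto
    finally show ?thesis
      using admissible_antimono[OF admissible_exp_minus_max that, of M] by simp
  qed
  show ?thesis
    using le[of a b] le[of b a] by (cases "a \<le> b") (auto simp: abs_minus_commute)
qed

lemma rhs_g_exp_minus_max:
  assumes "\<And>j. j \<in> {2..k} \<Longrightarrow> M \<le> x j - x (j - 1)"
  shows "rhs_g k (\<lambda>y. exp (- max y M)) x i = rhs_g k (\<lambda>y. exp (- y)) x i"
proof -
  have "bcoef_g k (\<lambda>y. exp (- max y M)) x j = bcoef_g k (\<lambda>y. exp (- y)) x j" for j
    using assms[of j] by (auto simp: bcoef_g_def max_def)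
  then show ?thesis by (simp add: rhs_g_def)
qed

lemma sigma_mult_increment_le:
  assumes g: "admissible g" and j: "1 \<le> j" "j \<le> Suc k"
    and M: "0 \<le> M" "\<And>l. l \<in> {2..k} \<Longrightarrow> g (a l) \<le> M"
  shows "sigma k (j - 1) * (g (a j) - g (b j)) \<le> real k ^ 2 * M * (\<Sum>l\<in>{2..k}. max (b l - a l) 0)"
proof (cases "j \<in> {2..k}")
  case False
  then have "j = 1 \<or> j = Suc k" using j by auto
  then show ?thesis using M(1) by (auto intro!: mult_nonneg_nonneg sum_nonneg)
next
  case True
  have "g (a j) - g (b j) \<le> g (a j) * max (b j - a j) 0"
    by (rule admissible_increment[OF g])
  also have "\<dots> \<le> M * (\<Sum>l\<in>{2..k}. max (b l - a l) 0)"
    using True M(2)[OF True] admissible_pos[OF g, of "a j"]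
    by (intro mult_mono member_le_sum) (auto intro: sum_nonneg)
  finally have "sigma k (j - 1) * (g (a j) - g (b j))
      \<le> sigma k (j - 1) * (M * (\<Sum>l\<in>{2..k}. max (b l - a l) 0))"
    using True sigma_nonneg[of "j - 1" k] by (intro mult_left_mono) auto
  also have "\<dots> \<le> real k ^ 2 * (M * (\<Sum>l\<in>{2..k}. max (b l - a l) 0))"
    using True sigma_le_square[of "j - 1" k] M(1)
    by (intro mult_right_mono) (auto intro!: mult_nonneg_nonneg sum_nonneg)
  finally show ?thesis by (simp add: mult.assoc)
qed

lemma rhs_g_gap_upper:
  assumes g: "admissible g" and j: "j \<in> {2..k}" and above: "Y < x j - x (j - 1)"
  shows "rhs_g k g x j - rhs_g k g x (j - 1) - (g Y - 1)
    \<le> 2 * real k ^ 2 * g Y * (\<Sum>l\<in>{2..k}. max (x l - x (l - 1) - Y) 0)"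
proof -
  let ?R = "real k ^ 2 * g Y * (\<Sum>l\<in>{2..k}. max (x l - x (l - 1) - Y) 0)"
  have "2 * sigma k (j - 1) * (g (x j - x (j - 1)) - g Y) \<le> 0"
    using j above admissible_antimono[OF g, of Y "x j - x (j - 1)"] sigma_nonneg[of "j - 1" k]
    by (intro mult_nonneg_nonpos) auto
  moreover have "sigma k j * (g Y - g (x (Suc j) - x j)) \<le> ?R"
    using sigma_mult_increment_le[OF g, of "Suc j" k "g Y" "\<lambda>_. Y" "\<lambda>l. x l - x (l - 1)"] j
    by (auto intro: less_imp_le admissible_pos[OF g])
  moreover have "sigma k (j - 2) * (g Y - g (x (j - 1) - x (j - 2))) \<le> ?R"
  proof -
    have jj: "j - 1 - 1 = j - 2" "1 \<le> j - 1" "j - 1 \<le> Suc k" using j by auto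
    show ?thesis
      using sigma_mult_increment_le[OF g jj(2,3), of "g Y" "\<lambda>_. Y" "\<lambda>l. x l - x (l - 1)"]
      unfolding jj(1) by (auto intro: less_imp_le admissible_pos[OF g])
  qed
  ultimately show ?thesis
    unfolding rhs_g_gap_eq[OF j, of g x "g Y"] by linarith
qed

lemma rhs_g_gap_lower:
  assumes g: "admissible g" and j: "j \<in> {2..k}" and below: "x j - x (j - 1) < Z"
  shows "g Z - 1 - (rhs_g k g x j - rhs_g k g x (j - 1))
    \<le> 2 * real k ^ 2 * (\<Sum>l\<in>{2..k}. g (x l - x (l - 1))) * (\<Sum>l\<in>{2..k}. max (Z - (x l - x (l - 1))) 0)"
proof -
  define M where "M = (\<Sum>l\<in>{2..k}. g (x l - x (l - 1)))"
  let ?R = "real k ^ 2 * M * (\<Sum>l\<in>{2..k}. max (Z - (x l - x (l - 1))) 0)"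
  have g0: "\<And>y. 0 \<le> g y" using admissible_pos[OF g] less_imp_le by blast
  have M: "0 \<le> M" "\<And>l. l \<in> {2..k} \<Longrightarrow> g (x l - x (l - 1)) \<le> M"
    unfolding M_def using g0 by (auto intro: sum_nonneg member_le_sum)
  have "2 * sigma k (j - 1) * (g Z - g (x j - x (j - 1))) \<le> 0"
    using j below admissible_antimono[OF g, of "x j - x (j - 1)" Z] sigma_nonneg[of "j - 1" k]
    by (intro mult_nonneg_nonpos) auto
  moreover have "sigma k j * (g (x (Suc j) - x j) - g Z) \<le> ?R"
    using sigma_mult_increment_le[OF g, of "Suc j" k M "\<lambda>l. x l - x (l - 1)" "\<lambda>_. Z"] j M by auto
  moreover have "sigma k (j - 2) * (g (x (j - 1) - x (j - 2)) - g Z) \<le> ?R"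
  proof -
    have jj: "j - 1 - 1 = j - 2" "1 \<le> j - 1" "j - 1 \<le> Suc k" using j by auto
    show ?thesis
      using sigma_mult_increment_le[OF g jj(2,3), of M "\<lambda>l. x l - x (l - 1)" "\<lambda>_. Z"] M
      unfolding jj(1) by simp
  qed
  ultimately show ?thesis
    using rhs_g_gap_eq[OF j, of g x "g Z"] unfolding M_def by (simp add: algebra_simps)
qed

section \<open>Comparison of the gaps with the scalar equation\<close>

lemma continuous_on_solves_g:
  "solves_g k g xi I \<Longrightarrow> j \<in> {1..k} \<Longrightarrow> continuous_on I (\<lambda>t. xi t j)"
  unfolding solves_g_def continuous_on_eq_continuous_within
  using DERIV_continuous by blast

lemma solves_g_gap_has_derivative:
  assumes "solves_g k g xi I" "i \<in> {2..k}" "t \<in> I"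
  shows "((\<lambda>t. xi t i - xi t (i - 1)) has_real_derivative
      rhs_g k g (xi t) i - rhs_g k g (xi t) (i - 1)) (at t within I)"
proof -
  have "i \<in> {1..k}" "i - 1 \<in> {1..k}" using assms(2) by auto
  then show ?thesis using assms(1,3) unfolding solves_g_def by (intro DERIV_diff) auto
qed

lemma gap_le_supersolution:
  assumes g: "admissible g" and sol: "solves_g k g xi {0..<T}"
    and Y: "\<And>t. t \<in> {0..<T} \<Longrightarrow> (Y has_real_derivative g (Y t) - 1) (at t within {0..<T})"
    and init: "\<And>i. i \<in> {2..k} \<Longrightarrow> xi 0 i - xi 0 (i - 1) \<le> Y 0"
    and i: "i \<in> {2..k}" and t: "t \<in> {0..<T}"
  shows "xi t i - xi t (i - 1) \<le> Y t"
proof -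
  have "continuous_on {0..<T} Y"
    using Y continuous_on_eq_continuous_within DERIV_continuous by blast
  then have L: "continuous_on {0..<T} (\<lambda>t. 2 * real k ^ 2 * g (Y t))"
    by (intro continuous_intros continuous_on_compose2[OF admissible_continuous[OF g]]) auto
  have "xi t i - xi t (i - 1) - Y t \<le> 0"
  proof (rule family_nonpos_invariant[OF _ _ _ _ L i t, where d = "\<lambda>j t. xi t j - xi t (j - 1) - Y t"
        and d' = "\<lambda>j t. rhs_g k g (xi t) j - rhs_g k g (xi t) (j - 1) - (g (Y t) - 1)"])
    show "((\<lambda>t. xi t j - xi t (j - 1) - Y t) has_real_derivative
        rhs_g k g (xi t) j - rhs_g k g (xi t) (j - 1) - (g (Y t) - 1)) (at t within {0..<T})"
      if "j \<in> {2..k}" "t \<in> {0..<T}" for j t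
      using solves_g_gap_has_derivative[OF sol that] Y[OF that(2)] by (rule DERIV_diff)
    show "rhs_g k g (xi t) j - rhs_g k g (xi t) (j - 1) - (g (Y t) - 1)
        \<le> 2 * real k ^ 2 * g (Y t) * (\<Sum>l\<in>{2..k}. max (xi t l - xi t (l - 1) - Y t) 0)"
      if "j \<in> {2..k}" "0 < xi t j - xi t (j - 1) - Y t" for j t
      using rhs_g_gap_upper[OF g that(1), of "Y t" "xi t"] that(2) by simp
  qed (use init in auto)
  then show ?thesis by simp
qed

lemma subsolution_le_gap:
  assumes g: "admissible g" and sol: "solves_g k g xi {0..<T}"
    and Z: "\<And>t. t \<in> {0..<T} \<Longrightarrow> (Z has_real_derivative g (Z t) - 1) (at t within {0..<T})"
    and init: "\<And>i. i \<in> {2..k} \<Longrightarrow> Z 0 \<le> xi 0 i - xi 0 (i - 1)"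
    and i: "i \<in> {2..k}" and t: "t \<in> {0..<T}"
  shows "Z t \<le> xi t i - xi t (i - 1)"
proof -
  have "continuous_on {0..<T} (\<lambda>t. g (xi t l - xi t (l - 1)))" if "l \<in> {2..k}" for l
  proof -
    have "l \<in> {1..k}" "l - 1 \<in> {1..k}" using that by auto
    then show ?thesis using continuous_on_solves_g[OF sol]
      by (intro continuous_on_compose2[OF admissible_continuous[OF g]] continuous_on_diff) auto
  qed
  then have L: "continuous_on {0..<T} (\<lambda>t. 2 * real k ^ 2 * (\<Sum>l\<in>{2..k}. g (xi t l - xi t (l - 1))))"
    by (intro continuous_intros) auto
  have "Z t - (xi t i - xi t (i - 1)) \<le> 0"
  proof (rule family_nonpos_invariant[OF _ _ _ _ L i t, where d = "\<lambda>j t. Z t - (xi t j - xi t (j - 1))"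
        and d' = "\<lambda>j t. g (Z t) - 1 - (rhs_g k g (xi t) j - rhs_g k g (xi t) (j - 1))"])
    show "((\<lambda>t. Z t - (xi t j - xi t (j - 1))) has_real_derivative
        g (Z t) - 1 - (rhs_g k g (xi t) j - rhs_g k g (xi t) (j - 1))) (at t within {0..<T})"
      if "j \<in> {2..k}" "t \<in> {0..<T}" for j t
      using Z[OF that(2)] solves_g_gap_has_derivative[OF sol that] by (rule DERIV_diff)
    show "g (Z t) - 1 - (rhs_g k g (xi t) j - rhs_g k g (xi t) (j - 1))
        \<le> 2 * real k ^ 2 * (\<Sum>l\<in>{2..k}. g (xi t l - xi t (l - 1)))
          * (\<Sum>l\<in>{2..k}. max (Z t - (xi t l - xi t (l - 1))) 0)"
      if "j \<in> {2..k}" "0 < Z t - (xi t j - xi t (j - 1))" for j t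
      using rhs_g_gap_lower[OF g that(1), of "xi t" "Z t"] that(2) by simp
  qed (use init in auto)
  then show ?thesis by simp
qed

definition scalar_solution :: "real \<Rightarrow> real \<Rightarrow> real" where
  "scalar_solution a t = ln (1 + a * exp (- t))"

lemma scalar_solution_arg_pos: "a > -1 \<Longrightarrow> t \<ge> 0 \<Longrightarrow> 1 + a * exp (- t) > (0::real)"
proof (cases "a \<ge> 0")
  case False
  assume "a > -1" "t \<ge> 0"
  then have "exp (- t) \<le> 1" by simp
  then have "a \<le> a * exp (- t)" using False by (simp add: mult_le_cancel_left1)
  then show ?thesis using \<open>a > -1\<close> by linarith
qed (simp add: add_pos_nonneg)

lemma scalar_solution_has_derivative:
  assumes a: "a > -1" and t: "t \<ge> 0"
  shows "(scalar_solution a has_real_derivative exp (- scalar_solution a t) - 1) (at t within S)"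
proof -
  have q: "1 + a * exp (- t) > 0" using scalar_solution_arg_pos[OF a t] .
  have "(scalar_solution a has_real_derivative (a * (exp (- t) * (- 1))) / (1 + a * exp (- t))) (at t within S)"
    unfolding scalar_solution_def using q by (auto intro!: derivative_eq_intros)
  moreover have "exp (- scalar_solution a t) - 1 = (a * (exp (- t) * (- 1))) / (1 + a * exp (- t))"
    unfolding scalar_solution_def using q by (simp add: exp_minus exp_ln field_simps)
  ultimately show ?thesis by simp
qed

lemma scalar_solution_0: "scalar_solution a 0 = ln (1 + a)"
  by (simp add: scalar_solution_def)

lemma scalar_solution_nonneg_bounds:
  assumes "a \<ge> 0" "t \<ge> 0"
  shows "0 \<le> scalar_solution a t" "scalar_solution a t \<le> a * exp (- t)"
  using assms unfolding scalar_solution_def by (auto intro!: ln_add_one_self_le_self)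

lemma scalar_solution_nonpos_bounds:
  assumes a: "-1 < a" "a \<le> 0" and t: "t \<ge> 0"
  shows "ln (1 + a) \<le> scalar_solution a t" "scalar_solution a t \<le> 0"
    and "- scalar_solution a t \<le> - a / (1 + a) * exp (- t)"
proof -
  have q: "1 + a * exp (- t) > 0" using scalar_solution_arg_pos[OF a(1) t] .
  have e: "exp (- t) \<le> 1" using t by simp
  have "a \<le> a * exp (- t)" using a e by (simp add: mult_le_cancel_left1)
  then show "ln (1 + a) \<le> scalar_solution a t"
    unfolding scalar_solution_def using a by (subst ln_le_cancel_iff) auto
  have "a * exp (- t) \<le> 0" using a by (simp add: mult_nonpos_nonneg)
  then show "scalar_solution a t \<le> 0" unfolding scalar_solution_def using q by simp
  define u where "u = - a * exp (- t)"
  have u: "0 \<le> u" "u \<le> - a"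
    unfolding u_def using a e by (auto simp: mult_le_cancel_left1 mult_nonpos_nonneg)
  have "- scalar_solution a t = ln (1 / (1 - u))"
    unfolding scalar_solution_def u_def using q by (simp add: ln_div)
  also have "\<dots> \<le> 1 / (1 - u) - 1" using u a by (intro ln_le_minus_one) auto
  also have "\<dots> = u / (1 - u)" using u a by (simp add: field_simps)
  also have "\<dots> \<le> u / (1 + a)" using u a by (intro divide_left_mono) auto
  finally show "- scalar_solution a t \<le> - a / (1 + a) * exp (- t)" by (simp add: u_def)
qed

text \<open>The solutions of \<open>y' = exp (- y) - 1\<close> issuing from \<open>\<plusminus> 2 * C0\<close> stay above \<open>- 2 * C0\<close>,
  where \<open>g\<close> agrees with \<open>exp (- y)\<close>; so they bound the gaps from above and below.\<close>

lemma solves_g_gap_bounds: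
  assumes g: "admissible g" and C0: "0 \<le> C0"
    and g_exp: "\<And>y. y \<ge> - 2 * C0 \<Longrightarrow> g y = exp (- y)"
    and sol: "solves_g k g xi {0..<T}"
    and init: "\<And>i. i \<in> {1..k} \<Longrightarrow> \<bar>xi 0 i\<bar> \<le> C0"
    and i: "i \<in> {2..k}" and t: "t \<in> {0..<T}"
  shows "- 2 * C0 \<le> xi t i - xi t (i - 1)"
    and "\<bar>xi t i - xi t (i - 1)\<bar> \<le> (exp (2 * C0) - 1) * exp (- t)"
proof -
  define aY where "aY = exp (2 * C0) - 1"
  define aZ where "aZ = exp (- 2 * C0) - 1"
  have aY: "aY \<ge> 0" "aY > -1" and aZ: "aZ \<le> 0" "aZ > -1"
    using C0 by (auto simp: aY_def aZ_def)
  have t0: "t \<ge> 0" using t by simp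
  have init_gap: "- 2 * C0 \<le> xi 0 j - xi 0 (j - 1) \<and> xi 0 j - xi 0 (j - 1) \<le> 2 * C0"
    if "j \<in> {2..k}" for j
  proof -
    have "j \<in> {1..k}" "j - 1 \<in> {1..k}" using that by auto
    then show ?thesis using init[of j] init[of "j - 1"] by (auto simp: abs_le_iff)
  qed
  have "xi t i - xi t (i - 1) \<le> scalar_solution aY t"
  proof (rule gap_le_supersolution[OF g sol _ _ i t])
    fix s assume s: "s \<in> {0..<T}"
    then have "g (scalar_solution aY s) = exp (- scalar_solution aY s)"
      using scalar_solution_nonneg_bounds(1)[OF aY(1), of s] C0 by (intro g_exp) auto
    then show "(scalar_solution aY has_real_derivative g (scalar_solution aY s) - 1) (at s within {0..<T})"
      using scalar_solution_has_derivative[OF aY(2)] s by auto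
  qed (use init_gap in \<open>auto simp: scalar_solution_0 aY_def\<close>)
  moreover have "scalar_solution aZ t \<le> xi t i - xi t (i - 1)"
  proof (rule subsolution_le_gap[OF g sol _ _ i t])
    fix s assume s: "s \<in> {0..<T}"
    then have "g (scalar_solution aZ s) = exp (- scalar_solution aZ s)"
      using scalar_solution_nonpos_bounds(1)[OF aZ(2,1), of s] by (intro g_exp) (auto simp: aZ_def)
    then show "(scalar_solution aZ has_real_derivative g (scalar_solution aZ s) - 1) (at s within {0..<T})"
      using scalar_solution_has_derivative[OF aZ(2)] s by auto
  qed (use init_gap in \<open>auto simp: scalar_solution_0 aZ_def\<close>)
  moreover have "- aZ / (1 + aZ) = exp (2 * C0) - 1"
    by (simp add: aZ_def field_simps exp_minus)
  ultimately show "- 2 * C0 \<le> xi t i - xi t (i - 1)"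
    and "\<bar>xi t i - xi t (i - 1)\<bar> \<le> (exp (2 * C0) - 1) * exp (- t)"
    using scalar_solution_nonneg_bounds[OF aY(1) t0] scalar_solution_nonpos_bounds[OF aZ(2,1) t0]
    by (auto simp: aY_def aZ_def abs_le_iff)
qed

section \<open>Decay and global existence for system (i)\<close>

lemma solves_g_sum_const:
  assumes sol: "solves_g k g xi {0..<T}" and t: "t \<in> {0..<T}"
  shows "(\<Sum>i=1..k. xi t i) = (\<Sum>i=1..k. xi 0 i)"
proof -
  have "\<exists>c. \<forall>s\<in>{0..<T}. (\<Sum>i=1..k. xi s i) = c"
  proof (rule has_field_derivative_zero_constant)
    fix s assume "s \<in> {0..<T}"
    then have "((\<lambda>s. \<Sum>i=1..k. xi s i) has_real_derivative (\<Sum>i=1..k. rhs_g k g (xi s) i))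
        (at s within {0..<T})"
      using sol unfolding solves_g_def by (intro DERIV_sum) auto
    then show "((\<lambda>s. \<Sum>i=1..k. xi s i) has_real_derivative 0) (at s within {0..<T})"
      using sum_rhs_g[of k g "xi s"] by simp
  qed simp
  moreover have "0 \<in> {0..<T}" using t by auto
  ultimately show ?thesis using t by metis
qed

lemma abs_sub_first_le_gaps:
  fixes x :: "nat \<Rightarrow> real"
  assumes gaps: "\<And>i. i \<in> {2..k} \<Longrightarrow> \<bar>x i - x (i - 1)\<bar> \<le> e"
  shows "i \<in> {1..k} \<Longrightarrow> \<bar>x i - x 1\<bar> \<le> real (i - 1) * e"
proof (induction i)
  case (Suc n)
  show ?case
  proof (cases "n = 0")
    case False
    then have "n \<in> {1..k}" "Suc n \<in> {2..k}" using Suc.prems by auto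
    then have "\<bar>x (Suc n) - x 1\<bar> \<le> e + real (n - 1) * e"
      using gaps[of "Suc n"] Suc.IH by fastforce
    then show ?thesis using False by (simp add: algebra_simps of_nat_diff)
  qed simp
qed simp

lemma abs_le_of_gaps_sum_zero:
  fixes x :: "nat \<Rightarrow> real"
  assumes e: "0 \<le> e" and gaps: "\<And>i. i \<in> {2..k} \<Longrightarrow> \<bar>x i - x (i - 1)\<bar> \<le> e"
    and sum: "(\<Sum>i=1..k. x i) = 0" and i: "i \<in> {1..k}"
  shows "\<bar>x i\<bar> \<le> 2 * real k * e"
proof -
  have near_first: "\<bar>x j - x 1\<bar> \<le> real k * e" if "j \<in> {1..k}" for j
  proof -
    have "\<bar>x j - x 1\<bar> \<le> real (j - 1) * e"
      by (rule abs_sub_first_le_gaps[of k x e j]) (use gaps that in auto)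
    also have "\<dots> \<le> real k * e" using that e by (intro mult_right_mono) auto
    finally show ?thesis .
  qed
  have "real k * \<bar>x 1\<bar> = \<bar>\<Sum>j=1..k. x 1 - x j\<bar>"
    using sum by (simp add: sum_subtractf abs_mult)
  also have "\<dots> \<le> (\<Sum>j=1..k. real k * e)"
    using near_first by (intro order_trans[OF sum_abs] sum_mono) (simp add: abs_minus_commute)
  finally have "\<bar>x 1\<bar> \<le> real k * e" using i by (simp add: mult_le_cancel_left_pos)
  then show ?thesis using near_first[OF i] by linarith
qed

lemma solves_g_decay:
  assumes g: "admissible g" and C0: "0 \<le> C0"
    and g_exp: "\<And>y. y \<ge> - 2 * C0 \<Longrightarrow> g y = exp (- y)"
    and sol: "solves_g k g xi {0..<T}"
    and sum: "(\<Sum>i=1..k. xi 0 i) = 0" and init: "\<And>i. i \<in> {1..k} \<Longrightarrow> \<bar>xi 0 i\<bar> \<le> C0"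
    and t: "t \<in> {0..<T}" and i: "i \<in> {1..k}"
  shows "\<bar>xi t i\<bar> \<le> 2 * real k * ((exp (2 * C0) - 1) * exp (- t))"
  using solves_g_gap_bounds(2)[OF g C0 g_exp sol init _ t] solves_g_sum_const[OF sol t] sum C0
  by (intro abs_le_of_gaps_sum_zero[OF _ _ _ i]) auto

lemma solves1_decay:
  assumes sol: "solves1 k xi {0..<T}" and C0: "0 \<le> C0"
    and sum: "(\<Sum>i=1..k. xi 0 i) = 0" and init: "\<And>i. i \<in> {1..k} \<Longrightarrow> \<bar>xi 0 i\<bar> \<le> C0"
    and t: "t \<in> {0..<T}" and i: "i \<in> {1..k}"
  shows "\<bar>xi t i\<bar> \<le> 2 * real k * (exp (2 * C0) - 1) * exp (- t)"
proof -
  have "solves_g k (\<lambda>y. exp (- y)) xi {0..<T}" using sol by (simp add: solves1_iff_solves_g)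
  from solves_g_decay[OF admissible_exp_minus C0 _ this sum init t i] show ?thesis
    by (simp add: mult.assoc)
qed

instance bcontfun :: (metric_space, banach) banach ..

lemma bounded_linear_apply_bcontfun:
  "bounded_linear (\<lambda>u :: 'a::topological_space \<Rightarrow>\<^sub>C 'b::real_normed_vector. apply_bcontfun u x)"
  by (rule bounded_linear_intro[where K = 1]) (auto intro: norm_bounded)

text \<open>States \<open>x 1, \<dots>, x k\<close> are embedded into the Banach space \<open>real \<Rightarrow>\<^sub>C real\<close> as
  combinations of tents with disjoint supports centred at \<open>1, \<dots>, k\<close>; they are read back by
  evaluation at these points.\<close>

definition tent :: "real \<Rightarrow> real" where
  "tent r = max 0 (1 - 2 * \<bar>r\<bar>)"

lemma tent_diff_of_nat: "tent (real j - real i) = (if i = j then 1 else 0)"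
proof (cases "i = j")
  case False
  then have "\<bar>real j - real i\<bar> \<ge> 1" by linarith
  then show ?thesis using False by (simp add: tent_def)
qed (simp add: tent_def)

definition embed_fun :: "nat \<Rightarrow> (nat \<Rightarrow> real) \<Rightarrow> real \<Rightarrow> real" where
  "embed_fun k x s = (\<Sum>i=1..k. x i * tent (s - real i))"

lemma norm_embed_fun_le: "norm (embed_fun k x s) \<le> (\<Sum>i=1..k. \<bar>x i\<bar>)"
  unfolding embed_fun_def real_norm_def
  by (intro order_trans[OF sum_abs] sum_mono) (auto simp: abs_mult tent_def intro: mult_left_le)

definition embed_state :: "nat \<Rightarrow> (nat \<Rightarrow> real) \<Rightarrow> real \<Rightarrow>\<^sub>C real" where
  "embed_state k x = Bcontfun (embed_fun k x)"

lemma apply_embed_state: "apply_bcontfun (embed_state k x) = embed_fun k x"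
proof -
  have "embed_fun k x \<in> bcontfun"
  proof (rule bcontfun_normI)
    show "continuous_on UNIV (embed_fun k x)"
      unfolding embed_fun_def tent_def by (intro continuous_intros)
    show "norm (embed_fun k x s) \<le> (\<Sum>i=1..k. \<bar>x i\<bar>)" for s
      using norm_embed_fun_le[of k x s] by simp
  qed
  then show ?thesis by (simp add: embed_state_def Bcontfun_inverse)
qed

lemma embed_state_at_nat: "apply_bcontfun (embed_state k x) (real j) = (if j \<in> {1..k} then x j else 0)"
  by (simp add: apply_embed_state embed_fun_def tent_diff_of_nat if_distrib sum.delta cong: if_cong)

lemma norm_embed_state_le: "norm (embed_state k x) \<le> (\<Sum>i=1..k. \<bar>x i\<bar>)"
  using norm_embed_fun_le[of k x] by (intro norm_bound) (simp add: apply_embed_state)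

lemma embed_state_diff: "embed_state k x - embed_state k y = embed_state k (\<lambda>i. x i - y i)"
  by (rule bcontfun_eqI) (simp add: apply_embed_state embed_fun_def sum_subtractf left_diff_distrib)

definition lifted_rhs_g :: "nat \<Rightarrow> (real \<Rightarrow> real) \<Rightarrow> (real \<Rightarrow>\<^sub>C real) \<Rightarrow> real \<Rightarrow>\<^sub>C real" where
  "lifted_rhs_g k g u = embed_state k (rhs_g k g (\<lambda>j. apply_bcontfun u (real j)))"

lemma lifted_rhs_g_lipschitz:
  assumes g: "\<And>a b. \<bar>g a - g b\<bar> \<le> E * \<bar>a - b\<bar>" and E: "0 \<le> E"
  shows "norm (lifted_rhs_g k g u - lifted_rhs_g k g v) \<le> real k * (4 * real k ^ 2 * E) * norm (u - v)"
proof -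
  define x where "x j = apply_bcontfun u (real j)" for j
  define y where "y j = apply_bcontfun v (real j)" for j
  have close: "\<bar>x j - y j\<bar> \<le> norm (u - v)" for j
    using norm_bounded[of "u - v" "real j"] by (simp add: x_def y_def)
  have "\<bar>rhs_g k g x i - rhs_g k g y i\<bar> \<le> 4 * real k ^ 2 * E * norm (u - v)" for i
  proof -
    have "\<bar>rhs_g k g x i - rhs_g k g y i\<bar>
        \<le> \<bar>bcoef_g k g x i - bcoef_g k g y i\<bar> + \<bar>bcoef_g k g x (Suc i) - bcoef_g k g y (Suc i)\<bar>"
      unfolding rhs_g_def by linarith
    then show ?thesis
      using bcoef_g_lipschitz[where x = x and x' = y and k = k, OF g E close, of i]
        bcoef_g_lipschitz[where x = x and x' = y and k = k, OF g E close, of "Suc i"] by simp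
  qed
  then have "norm (embed_state k (\<lambda>i. rhs_g k g x i - rhs_g k g y i))
      \<le> (\<Sum>i=1..k. 4 * real k ^ 2 * E * norm (u - v))"
    by (intro order_trans[OF norm_embed_state_le] sum_mono)
  then show ?thesis
    unfolding lifted_rhs_g_def embed_state_diff x_def[symmetric] y_def[symmetric]
    by (simp add: mult.assoc)
qed

lemma solves_g_exists:
  assumes g: "\<And>a b. \<bar>g a - g b\<bar> \<le> E * \<bar>a - b\<bar>" and E: "0 \<le> E"
  shows "\<exists>xi. solves_g k g xi {0..} \<and> xi 0 = x0"
proof -
  obtain \<phi> where \<phi>0: "\<phi> 0 = embed_state k x0"
    and \<phi>: "\<And>t. t \<ge> 0 \<Longrightarrow> (\<phi> has_vector_derivative lifted_rhs_g k g (\<phi> t)) (at t within {0..})"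
    using lipschitz_global_solution[of "lifted_rhs_g k g" "real k * (4 * real k ^ 2 * E)" "embed_state k x0"]
      lifted_rhs_g_lipschitz[OF g E] E by auto
  define xi where "xi t i = (if i \<in> {1..k} then apply_bcontfun (\<phi> t) (real i) else x0 i)" for t i
  have "solves_g k g xi {0..}"
    unfolding solves_g_def
  proof (intro ballI)
    fix t :: real and i :: nat assume t: "t \<in> {0..}" and i: "i \<in> {1..k}"
    have "((\<lambda>t. apply_bcontfun (\<phi> t) (real i)) has_vector_derivative
        apply_bcontfun (lifted_rhs_g k g (\<phi> t)) (real i)) (at t within {0..})"
      using bounded_linear.has_vector_derivative[OF bounded_linear_apply_bcontfun \<phi>] t by auto
    moreover have "apply_bcontfun (lifted_rhs_g k g (\<phi> t)) (real i) = rhs_g k g (xi t) i"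
      using i by (auto simp: lifted_rhs_g_def embed_state_at_nat xi_def intro!: rhs_g_cong)
    ultimately show "((\<lambda>t. xi t i) has_real_derivative rhs_g k g (xi t) i) (at t within {0..})"
      using i by (simp add: xi_def has_real_derivative_iff_has_vector_derivative)
  qed
  moreover have "xi 0 = x0" by (auto simp: xi_def \<phi>0 embed_state_at_nat)
  ultimately show ?thesis by auto
qed

lemma solves1_exists: "\<exists>xi. solves1 k xi {0..} \<and> xi 0 = x0"
proof -
  define C0 where "C0 = (\<Sum>i=1..k. \<bar>x0 i\<bar>)"
  define g where "g y = exp (- max y (- 2 * C0))" for y
  have C0: "0 \<le> C0" "\<And>i. i \<in> {1..k} \<Longrightarrow> \<bar>x0 i\<bar> \<le> C0"
    unfolding C0_def by (auto intro: sum_nonneg member_le_sum)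
  have g: "admissible g" "\<And>y. y \<ge> - 2 * C0 \<Longrightarrow> g y = exp (- y)"
    unfolding g_def by (rule admissible_exp_minus_max) (simp add: max_def)
  obtain xi where sol: "solves_g k g xi {0..}" and xi0: "xi 0 = x0"
    using solves_g_exists[OF exp_minus_max_lipschitz] unfolding g_def by fastforce
  have "solves_g k (\<lambda>y. exp (- y)) xi {0..}"
    unfolding solves_g_def
  proof (intro ballI)
    fix t :: real and i assume t: "t \<in> {0..}" and i: "i \<in> {1..k}"
    have solT: "solves_g k g xi {0..<t + 1}" by (rule solves_g_subset[OF sol]) auto
    have "- 2 * C0 \<le> xi t j - xi t (j - 1)" if "j \<in> {2..k}" for j
      using solves_g_gap_bounds(1)[OF g(1) C0(1) g(2) solT _ that] C0(2) xi0 t by auto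
    then have "rhs_g k g (xi t) i = rhs_g k (\<lambda>y. exp (- y)) (xi t) i"
      unfolding g_def by (rule rhs_g_exp_minus_max)
    then show "((\<lambda>t. xi t i) has_real_derivative rhs_g k (\<lambda>y. exp (- y)) (xi t) i) (at t within {0..})"
      using sol t i unfolding solves_g_def by metis
  qed
  then show ?thesis using xi0 solves1_iff_solves_g by blast
qed

section \<open>System (ii)\<close>

definition alpha_spec :: "real \<Rightarrow> real \<Rightarrow> nat \<Rightarrow> (nat \<Rightarrow> real) \<Rightarrow> bool" where
  "alpha_spec p c1 k a \<longleftrightarrow> (\<forall>i. i \<notin> {1..k} \<longrightarrow> a i = 0)
      \<and> (\<Sum>i=1..k. a i) = 0
      \<and> (\<forall>i\<in>{2..k}. exp (- (2 / (p - 1)) * (a i - a (i - 1)))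
            = (p - 1) / (4 * c1) * (real i - 1) * (real k + 1 - real i))"

lemma alpha_spec_exists:
  assumes p: "p > 1" and c1: "c1 > 0"
  shows "\<exists>a. alpha_spec p c1 k a"
proof -
  define A where "A i = (p - 1) / (4 * c1) * (real i - 1) * (real k + 1 - real i)" for i
  define \<delta> where "\<delta> i = - (p - 1) / 2 * ln (A i)" for i
  define a0 where "a0 i = (\<Sum>j\<in>{2..i}. \<delta> j)" for i
  define a where "a i = (if i \<in> {1..k} then a0 i - (\<Sum>j=1..k. a0 j) / real k else 0)" for i
  have "exp (- (2 / (p - 1)) * (a i - a (i - 1))) = A i" if i: "i \<in> {2..k}" for i
  proof -
    obtain n where n: "i = Suc n" using i by (cases i) auto
    then have "a0 i = \<delta> i + a0 (i - 1)" using i by (simp add: a0_def)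
    moreover have "i \<in> {1..k}" "i - 1 \<in> {1..k}" using i by auto
    ultimately have "a i - a (i - 1) = \<delta> i" by (simp add: a_def)
    then have "- (2 / (p - 1)) * (a i - a (i - 1)) = ln (A i)" using p by (simp add: \<delta>_def field_simps)
    moreover have "A i > 0" using i p c1 by (auto simp: A_def intro!: mult_pos_pos divide_pos_pos)
    ultimately show ?thesis by simp
  qed
  moreover have "(\<Sum>i=1..k. a i) = 0"
    by (cases "k = 0") (simp_all add: a_def sum_subtractf)
  ultimately have "alpha_spec p c1 k a"
    by (auto simp: alpha_spec_def a_def A_def)
  then show ?thesis by blast
qed

lemma alpha_spec_unique:
  assumes p: "p > 1" and a: "alpha_spec p c1 k a" and b: "alpha_spec p c1 k b"
  shows "a = b"
proof
  fix i
  have gaps: "\<bar>(a j - b j) - (a (j - 1) - b (j - 1))\<bar> \<le> 0" if "j \<in> {2..k}" for j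
  proof -
    have "exp (- (2 / (p - 1)) * (a j - a (j - 1))) = exp (- (2 / (p - 1)) * (b j - b (j - 1)))"
      using a b that by (simp add: alpha_spec_def)
    then show ?thesis using p by simp
  qed
  show "a i = b i"
  proof (cases "i \<in> {1..k}")
    case True
    have "(\<Sum>j=1..k. a j - b j) = 0" using a b by (simp add: alpha_spec_def sum_subtractf)
    then show ?thesis
      using abs_le_of_gaps_sum_zero[of 0 k "\<lambda>j. a j - b j", OF _ gaps _ True] by simp
  qed (use a b in \<open>simp add: alpha_spec_def\<close>)
qed

lemma alpha_spec_alpha_bar:
  assumes "p > 1" and "c1 > 0"
  shows "alpha_spec p c1 k (alpha_bar p c1 k)"
proof -
  have "alpha_bar p c1 k = (THE a. alpha_spec p c1 k a)"
    by (simp add: alpha_bar_def alpha_spec_def)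
  then show ?thesis
    using alpha_spec_exists[OF assms] alpha_spec_unique[OF assms(1)] theI' by metis
qed

text \<open>Along \<open>zeta_bar\<close> the exponential terms of (ii) decay like \<open>1 / s\<close>, with exactly the
  coefficients \<open>sigma\<close> of (i): the equation for \<open>alpha_bar\<close> was designed for this.\<close>

lemma Eterm_around_zeta_bar:
  assumes p: "p > 1" and c1: "c1 > 0" and s: "s > 0" and j: "j \<in> {1..Suc k}"
    and z: "\<And>l. z l = zeta_bar p c1 k l s + m0 + (p - 1) / 2 * x l"
  shows "c1 * Eterm p k z j = (p - 1) / 2 / s * sigma k (j - 1) * exp (- (x j - x (j - 1)))"
proof (cases "j \<in> {2..k}")
  case False
  then have "j = 1 \<or> j = Suc k" using j by auto
  then show ?thesis using False by (auto simp: Eterm_def)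
next
  case True
  define \<alpha> where "\<alpha> = alpha_bar p c1 k"
  have rj: "real (j - 1) = real j - 1" using True by auto
  have e: "- (2 / (p - 1)) * (z j - z (j - 1))
      = - ln s + (- (2 / (p - 1)) * (\<alpha> j - \<alpha> (j - 1))) + - (x j - x (j - 1))"
    using p unfolding z zeta_bar_def \<alpha>_def rj by (simp add: field_simps)
  have "Eterm p k z j = exp (- (2 / (p - 1)) * (z j - z (j - 1)))"
    using True by (simp add: Eterm_def)
  also have "\<dots> = exp (- ln s) * exp (- (2 / (p - 1)) * (\<alpha> j - \<alpha> (j - 1))) * exp (- (x j - x (j - 1)))"
    by (simp only: e exp_add)
  also have "\<dots> = (1 / s) * ((p - 1) / (4 * c1) * (real j - 1) * (real k + 1 - real j)) * exp (- (x j - x (j - 1)))"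
    using alpha_spec_alpha_bar[OF p c1] True s by (simp add: alpha_spec_def \<alpha>_def exp_minus inverse_eq_divide)
  finally have E: "Eterm p k z j
      = (1 / s) * ((p - 1) / (4 * c1) * (real j - 1) * (real k + 1 - real j)) * exp (- (x j - x (j - 1)))" .
  have \<sigma>: "sigma k (j - 1) = (real j - 1) * (real k + 1 - real j) / 2"
    unfolding sigma_def rj by (simp add: algebra_simps)
  show ?thesis unfolding E \<sigma> using c1 s by (simp add: field_simps)
qed

lemma rhs2_around_zeta_bar:
  assumes p: "p > 1" and c1: "c1 > 0" and s: "s > 0" and i: "i \<in> {1..k}"
    and z: "\<And>l. z l = zeta_bar p c1 k l s + m0 + (p - 1) / 2 * x l"
  shows "rhs2 p c1 k z i = (p - 1) / 2 / s * (rhs1 k x i + (real i - (real k + 1) / 2))"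
proof -
  have "rhs2 p c1 k z i = c1 * Eterm p k z i - c1 * Eterm p k z (Suc i)"
    by (simp add: rhs2_def algebra_simps)
  also have "\<dots> = (p - 1) / 2 / s
      * (sigma k (i - 1) * exp (- (x i - x (i - 1))) - sigma k i * exp (- (x (Suc i) - x i)))"
    using Eterm_around_zeta_bar[OF p c1 s _ z, of i] Eterm_around_zeta_bar[OF p c1 s _ z, of "Suc i"] i
    by (simp add: algebra_simps)
  also have "sigma k (i - 1) * exp (- (x i - x (i - 1))) - sigma k i * exp (- (x (Suc i) - x i))
      = rhs1 k x i + (real i - (real k + 1) / 2)"
    using i sigma_diff[of i k] bcoef_g_eq[of i k "\<lambda>y. exp (- y)" x] bcoef_g_eq[of "Suc i" k "\<lambda>y. exp (- y)" x]
    by (simp add: rhs1_eq_rhs_g rhs_g_def algebra_simps)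
  finally show ?thesis .
qed

lemma solves2_of_solves1:
  assumes p: "p > 1" and c1: "c1 > 0" and S: "S \<subseteq> {0<..}"
    and sol: "solves1 k xi (ln ` S)"
  shows "solves2 p c1 k (\<lambda>s i. zeta_bar p c1 k i s + m0 + (p - 1) / 2 * xi (ln s) i) S"
  unfolding solves2_def
proof (intro ballI)
  fix s i assume s: "s \<in> S" and i: "i \<in> {1..k}"
  have s0: "s > 0" using s S by auto
  have "((\<lambda>s. xi s i) \<circ> ln has_real_derivative rhs1 k (xi (ln s)) i * (1 / s)) (at s within S)"
  proof (rule DERIV_image_chain)
    show "((\<lambda>s. xi s i) has_real_derivative rhs1 k (xi (ln s)) i) (at (ln s) within ln ` S)"
      using sol s i unfolding solves1_def by auto
    show "(ln has_real_derivative 1 / s) (at s within S)"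
      using s0 by (auto intro!: derivative_eq_intros)
  qed
  then have "((\<lambda>s. zeta_bar p c1 k i s + m0 + (p - 1) / 2 * xi (ln s) i) has_real_derivative
      (p - 1) / 2 / s * (rhs1 k (xi (ln s)) i + (real i - (real k + 1) / 2))) (at s within S)"
    unfolding zeta_bar_def using s0
    by (auto intro!: derivative_eq_intros simp: o_def field_simps)
  then show "((\<lambda>s. zeta_bar p c1 k i s + m0 + (p - 1) / 2 * xi (ln s) i) has_real_derivative
      rhs2 p c1 k (\<lambda>l. zeta_bar p c1 k l s + m0 + (p - 1) / 2 * xi (ln s) l) i) (at s within S)"
    by (subst rhs2_around_zeta_bar[OF p c1 s0 i]) auto
qed

lemma solves1_of_solves2:
  assumes p: "p > 1" and c1: "c1 > 0"
    and sol: "solves2 p c1 k zeta (exp ` S)"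
  shows "solves1 k (\<lambda>\<tau> i. (zeta (exp \<tau>) i - zeta_bar p c1 k i (exp \<tau>) - m0) / ((p - 1) / 2)) S"
  unfolding solves1_def
proof (intro ballI)
  fix \<tau> i assume \<tau>: "\<tau> \<in> S" and i: "i \<in> {1..k}"
  define c where "c = (p - 1) / 2"
  have c: "c > 0" using p by (simp add: c_def)
  define x where "x j = (zeta (exp \<tau>) j - zeta_bar p c1 k j (exp \<tau>) - m0) / c" for j
  have "zeta (exp \<tau>) l = zeta_bar p c1 k l (exp \<tau>) + m0 + (p - 1) / 2 * x l" for l
    using c unfolding x_def c_def by (simp add: field_simps)
  then have rhs2: "rhs2 p c1 k (zeta (exp \<tau>)) i = c / exp \<tau> * (rhs1 k x i + (real i - (real k + 1) / 2))"
    unfolding c_def by (intro rhs2_around_zeta_bar[OF p c1 _ i]) auto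
  have "((\<lambda>s. zeta s i) \<circ> exp has_real_derivative rhs2 p c1 k (zeta (exp \<tau>)) i * exp \<tau>)
      (at \<tau> within S)"
  proof (rule DERIV_image_chain)
    show "((\<lambda>s. zeta s i) has_real_derivative rhs2 p c1 k (zeta (exp \<tau>)) i) (at (exp \<tau>) within exp ` S)"
      using sol \<tau> i unfolding solves2_def by auto
  qed (auto intro!: derivative_eq_intros)
  moreover have zeta_bar_exp: "zeta_bar p c1 k i (exp u) = (real i - (real k + 1) / 2) * c * u + alpha_bar p c1 k i" for u
    by (simp add: zeta_bar_def c_def)
  ultimately have "((\<lambda>\<tau>. (zeta (exp \<tau>) i - zeta_bar p c1 k i (exp \<tau>) - m0) / c) has_real_derivative
      (rhs2 p c1 k (zeta (exp \<tau>)) i * exp \<tau> - (real i - (real k + 1) / 2) * c) / c) (at \<tau> within S)"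
    unfolding zeta_bar_exp using c by (auto intro!: derivative_eq_intros simp: o_def)
  moreover have "(rhs2 p c1 k (zeta (exp \<tau>)) i * exp \<tau> - (real i - (real k + 1) / 2) * c) / c = rhs1 k x i"
    unfolding rhs2 using c by (simp add: field_simps)
  ultimately have "((\<lambda>\<tau>. (zeta (exp \<tau>) i - zeta_bar p c1 k i (exp \<tau>) - m0) / c) has_real_derivative
      rhs1 k x i) (at \<tau> within S)"
    by simp
  then show "((\<lambda>\<tau>. (zeta (exp \<tau>) i - zeta_bar p c1 k i (exp \<tau>) - m0) / ((p - 1) / 2)) has_real_derivative
      rhs1 k (\<lambda>i. (zeta (exp \<tau>) i - zeta_bar p c1 k i (exp \<tau>) - m0) / ((p - 1) / 2)) i) (at \<tau> within S)"
    by (simp only: x_def[abs_def] c_def)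
qed

lemma solves2_exists:
  assumes p: "p > 1" and c1: "c1 > 0"
  shows "\<exists>zeta. solves2 p c1 k zeta {1..} \<and> zeta 1 = z1"
proof -
  define c where "c = (p - 1) / 2"
  have c: "c \<noteq> 0" using p by (simp add: c_def)
  define m0 where "m0 = (\<Sum>j=1..k. z1 j) / real k"
  obtain xi where xi: "solves1 k xi {0..}"
    and xi0: "xi 0 = (\<lambda>i. (z1 i - zeta_bar p c1 k i 1 - m0) / c)"
    using solves1_exists by blast
  have "ln ` {1..} = {0::real..}"
    by (auto intro!: image_eqI[where x = "exp _"])
  then have "solves2 p c1 k (\<lambda>s i. zeta_bar p c1 k i s + m0 + (p - 1) / 2 * xi (ln s) i) {1..}"
    using xi by (intro solves2_of_solves1[OF p c1]) auto
  moreover have "(\<lambda>i. zeta_bar p c1 k i 1 + m0 + (p - 1) / 2 * xi (ln 1) i) = z1"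
    using c by (simp add: xi0 c_def[symmetric])
  ultimately show ?thesis by blast
qed

lemma exp_image_atLeastLessThan: "T > 0 \<Longrightarrow> exp ` {0..<ln T} = {1..<T::real}"
proof
  assume T: "T > 0"
  then show "exp ` {0..<ln T} \<subseteq> {1..<T}"
    by (auto simp flip: exp_less_cancel_iff[of _ "ln T"])
  show "{1..<T} \<subseteq> exp ` {0..<ln T}"
  proof
    fix x assume "x \<in> {1..<T}"
    then show "x \<in> exp ` {0..<ln T}" by (intro image_eqI[where x = "ln x"]) auto
  qed
qed

lemma solves2_deviation_le:
  assumes p: "p > 1" and c1: "c1 > 0" and sol: "solves2 p c1 k zeta {1..<T}" and C0: "0 \<le> C0"
    and sum: "(\<Sum>i=1..k. zeta 1 i - zeta_bar p c1 k i 1 - m0) = 0"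
    and init: "\<And>i. i \<in> {1..k} \<Longrightarrow> \<bar>zeta 1 i - zeta_bar p c1 k i 1 - m0\<bar> \<le> (p - 1) / 2 * C0"
    and s: "s \<in> {1..<T}" and i: "i \<in> {1..k}"
  shows "\<bar>zeta s i - (zeta_bar p c1 k i s + m0)\<bar> \<le> (p - 1) / 2 * (2 * real k * (exp (2 * C0) - 1)) / s"
proof -
  define c where "c = (p - 1) / 2"
  have c: "c > 0" using p by (simp add: c_def)
  define xi where "xi \<tau> i = (zeta (exp \<tau>) i - zeta_bar p c1 k i (exp \<tau>) - m0) / ((p - 1) / 2)" for \<tau> i
  have sol1: "solves1 k xi {0..<ln T}"
    using sol exp_image_atLeastLessThan[of T] s unfolding xi_def
    by (intro solves1_of_solves2[OF p c1]) auto
  have "(\<Sum>i=1..k. xi 0 i) = 0"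
    using sum by (simp add: xi_def c_def[symmetric] sum_divide_distrib[symmetric])
  moreover have "\<bar>xi 0 j\<bar> \<le> C0" if "j \<in> {1..k}" for j
    using init[OF that] c by (simp add: xi_def c_def[symmetric] abs_div divide_le_eq mult.commute)
  moreover have "ln s \<in> {0..<ln T}" using s by auto
  ultimately have "\<bar>xi (ln s) i\<bar> \<le> 2 * real k * (exp (2 * C0) - 1) * exp (- ln s)"
    using solves1_decay[OF sol1 C0 _ _ _ i] by blast
  moreover have "zeta s i - (zeta_bar p c1 k i s + m0) = c * xi (ln s) i"
    using s c by (simp add: xi_def c_def[symmetric])
  ultimately have "\<bar>zeta s i - (zeta_bar p c1 k i s + m0)\<bar>
      \<le> c * (2 * real k * (exp (2 * C0) - 1) * exp (- ln s))"
    using c by (simp add: abs_mult)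
  also have "exp (- ln s) = 1 / s"
    using s by (simp add: exp_minus inverse_eq_divide)
  finally show ?thesis by (simp add: c_def)
qed

lemma solves2_near_zeta_bar:
  assumes p: "p > 1" and c1: "c1 > 0"
  obtains C where "C > 0"
    and "\<And>T zeta s i. solves2 p c1 k zeta {1..<T} \<Longrightarrow> zeta 1 = z1 \<Longrightarrow> s \<in> {1..<T} \<Longrightarrow> i \<in> {1..k} \<Longrightarrow>
      \<bar>zeta s i - (zeta_bar p c1 k i s + (\<Sum>j=1..k. z1 j) / real k)\<bar> \<le> C / s"
proof
  define c where "c = (p - 1) / 2"
  have c: "c > 0" using p by (simp add: c_def)
  define m0 where "m0 = (\<Sum>j=1..k. z1 j) / real k"
  define C0 where "C0 = (\<Sum>i=1..k. \<bar>z1 i - zeta_bar p c1 k i 1 - m0\<bar>) / c"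
  have C0: "0 \<le> C0" "\<And>i. i \<in> {1..k} \<Longrightarrow> \<bar>z1 i - zeta_bar p c1 k i 1 - m0\<bar> \<le> c * C0"
    unfolding C0_def using c by (auto intro: sum_nonneg member_le_sum)
  have "(\<Sum>i=1..k. z1 i - zeta_bar p c1 k i 1 - m0)
      = (\<Sum>i=1..k. z1 i) - (\<Sum>i=1..k. alpha_bar p c1 k i) - real k * m0"
    by (simp add: zeta_bar_def sum_subtractf)
  then have sum: "(\<Sum>i=1..k. z1 i - zeta_bar p c1 k i 1 - m0) = 0"
    using alpha_spec_alpha_bar[OF p c1] by (cases "k = 0") (auto simp: alpha_spec_def m0_def)
  show "c * (2 * real k * (exp (2 * C0) - 1)) + 1 > 0"
    using c C0 by (simp add: add_nonneg_pos)
  fix T zeta s i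
  assume "solves2 p c1 k zeta {1..<T}" "zeta 1 = z1" "s \<in> {1..<T}" "i \<in> {1..k}"
  then have "\<bar>zeta s i - (zeta_bar p c1 k i s + m0)\<bar> \<le> c * (2 * real k * (exp (2 * C0) - 1)) / s"
    using solves2_deviation_le[OF p c1 _ C0(1) _ _ _] sum C0(2) unfolding c_def by blast
  also have "\<dots> \<le> (c * (2 * real k * (exp (2 * C0) - 1)) + 1) / s"
    using \<open>s \<in> {1..<T}\<close> by (simp add: divide_right_mono)
  finally show "\<bar>zeta s i - (zeta_bar p c1 k i s + (\<Sum>j=1..k. z1 j) / real k)\<bar>
      \<le> (c * (2 * real k * (exp (2 * C0) - 1)) + 1) / s"
    by (simp add: m0_def)
qed

theorem proposition2p4:
  fixes p c1 :: real and k :: nat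
  assumes "p > 1" and "c1 > 0" and "k \<ge> 2"
  shows
   "(\<forall>C0>0. \<exists>C1>0. \<forall>x0 :: nat \<Rightarrow> real.
        (\<Sum>i=1..k. x0 i) = 0 \<and> (\<forall>i\<in>{1..k}. \<bar>x0 i\<bar> \<le> C0) \<longrightarrow>
          (\<exists>xi. solves1 k xi {0..} \<and> xi 0 = x0) \<and>
          (\<forall>T>0. \<forall>xi. solves1 k xi {0..<T} \<and> xi 0 = x0 \<longrightarrow>
              (\<forall>\<tau>\<in>{0..<T}. \<forall>i\<in>{1..k}. \<bar>xi \<tau> i\<bar> \<le> C1 * exp (- \<tau>))))
    \<and>
    (\<forall>z1 :: nat \<Rightarrow> real.
        (\<exists>zeta. solves2 p c1 k zeta {1..} \<and> zeta 1 = z1) \<and>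
        (\<exists>C>0. \<forall>T>1. \<forall>zeta. solves2 p c1 k zeta {1..<T} \<and> zeta 1 = z1 \<longrightarrow>
            (\<forall>s\<in>{1..<T}. \<forall>i\<in>{1..k}.
               \<bar>zeta s i - (zeta_bar p c1 k i s + (\<Sum>j=1..k. z1 j) / real k)\<bar> \<le> C / s)))"
proof (intro conjI allI impI)
  fix C0 :: real assume C0: "C0 > 0"
  let ?C1 = "2 * real k * (exp (2 * C0) - 1)"
  show "\<exists>C1>0. \<forall>x0. (\<Sum>i=1..k. x0 i) = 0 \<and> (\<forall>i\<in>{1..k}. \<bar>x0 i\<bar> \<le> C0) \<longrightarrow>
          (\<exists>xi. solves1 k xi {0..} \<and> xi 0 = x0) \<and>
          (\<forall>T>0. \<forall>xi. solves1 k xi {0..<T} \<and> xi 0 = x0 \<longrightarrow>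
              (\<forall>\<tau>\<in>{0..<T}. \<forall>i\<in>{1..k}. \<bar>xi \<tau> i\<bar> \<le> C1 * exp (- \<tau>)))"
  proof (intro exI[of _ ?C1] conjI allI impI ballI solves1_exists)
    show "?C1 > 0" using C0 \<open>k \<ge> 2\<close> by simp
    fix x0 T xi \<tau> i
    assume "(\<Sum>i=1..k. x0 i) = 0 \<and> (\<forall>i\<in>{1..k}. \<bar>x0 i\<bar> \<le> C0)" "solves1 k xi {0..<T} \<and> xi 0 = x0"
      and "\<tau> \<in> {0..<T}" "i \<in> {1..k}"
    then show "\<bar>xi \<tau> i\<bar> \<le> ?C1 * exp (- \<tau>)"
      using solves1_decay[of k xi T C0 \<tau> i] C0 by auto
  qed
next
  fix z1 :: "nat \<Rightarrow> real"
  show "\<exists>zeta. solves2 p c1 k zeta {1..} \<and> zeta 1 = z1"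
    using solves2_exists[OF assms(1,2)] .
  obtain C where "C > 0" and "\<And>T zeta s i. solves2 p c1 k zeta {1..<T} \<Longrightarrow> zeta 1 = z1 \<Longrightarrow>
      s \<in> {1..<T} \<Longrightarrow> i \<in> {1..k} \<Longrightarrow>
      \<bar>zeta s i - (zeta_bar p c1 k i s + (\<Sum>j=1..k. z1 j) / real k)\<bar> \<le> C / s"
    using solves2_near_zeta_bar[OF assms(1,2)] by blast
  then show "\<exists>C>0. \<forall>T>1. \<forall>zeta. solves2 p c1 k zeta {1..<T} \<and> zeta 1 = z1 \<longrightarrow>
      (\<forall>s\<in>{1..<T}. \<forall>i\<in>{1..k}. \<bar>zeta s i - (zeta_bar p c1 k i s + (\<Sum>j=1..k. z1 j) / real k)\<bar> \<le> C / s)"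
    by blast
qed

end
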